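(* $\displaystyle\int_0^{\infty}\left[\sinh^{-1}(\cosh u) - u\right]\,du = \frac{\pi^2}{16}$.
   Context: $\sinh^{-1}$ denotes the real inverse hyperbolic sine, $\sinh^{-1}x = \ln\!\left(x+\sqrt{x^2+1}\right)$ for all real $x$. *)

theory Defs
  imports "HOL-Analysis.Analysis"
begin

end

theory Submission
  imports Defs "HOL-Real_Asymp.Real_Asymp"
begin

text \<open>
  Put \<open>v = arsinh (cosh u)\<close> and \<open>X = exp (-(u + v))\<close>. The relation \<open>sinh v = cosh u\<close>
  says exactly that \<open>X = tanh ((v - u) / 2)\<close>, i.e. \<open>v - u = 2 artanh X\<close>. The Legendre
  chi function \<open>\<chi> x = (\<Sum>n. x^(2n+1) / (2n+1)^2)\<close> has derivative \<open>artanh x / x\<close>, and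
  this makes \<open>-(\<chi> X + (v - u)^2 / 4)\<close> an antiderivative of the integrand. It tends to \<open>0\<close>
  at infinity. At \<open>u = 0\<close> we get \<open>X = \<surd>2 - 1\<close>, the fixed point of the Landen map
  \<open>x \<mapsto> (1 - x) / (1 + x)\<close>, where Landen's identity
  \<open>\<chi> ((1 - x) / (1 + x)) + \<chi> x = \<pi>^2 / 8 + ln x artanh x\<close> gives \<open>\<chi> X\<close>.
\<close>

definition legendre_chi :: "real \<Rightarrow> real" where
  "legendre_chi x = (\<Sum>n. x ^ (2*n+1) / (2 * real n + 1)\<^sup>2)"

lemma legendre_chi_term_bound:
  assumes "\<bar>x\<bar> \<le> 1"
  shows "norm (x ^ (2*n+1) / (2 * real n + 1)\<^sup>2) \<le> 1 / (real n + 1)\<^sup>2"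
proof -
  have "norm (x ^ (2*n+1) / (2 * real n + 1)\<^sup>2) = \<bar>x\<bar> ^ (2*n+1) / (2 * real n + 1)\<^sup>2"
    by (simp add: power_abs abs_mult)
  also have "\<dots> \<le> 1 / (2 * real n + 1)\<^sup>2"
    using assms by (intro divide_right_mono power_le_one) auto
  also have "\<dots> \<le> 1 / (real n + 1)\<^sup>2"
    by (intro divide_left_mono power_mono) auto
  finally show ?thesis .
qed

lemma inverse_squares_sums_real: "(\<lambda>n::nat. 1 / (real n + 1)\<^sup>2) sums (pi\<^sup>2 / 6)"
  using inverse_squares_sums by (simp only: of_nat_power of_nat_add of_nat_1)

lemma summable_inverse_squares: "summable (\<lambda>n::nat. 1 / (real n + 1)\<^sup>2)"
  using inverse_squares_sums_real by (rule sums_summable)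

lemma legendre_chi_sums:
  "\<bar>x\<bar> \<le> 1 \<Longrightarrow> (\<lambda>n. x ^ (2*n+1) / (2 * real n + 1)\<^sup>2) sums legendre_chi x"
  unfolding legendre_chi_def
  by (intro summable_sums summable_comparison_test'[OF summable_inverse_squares])
     (use legendre_chi_term_bound in auto)

lemma continuous_on_legendre_chi: "continuous_on {-1..1} legendre_chi"
proof (rule uniform_limit_theorem)
  show "uniform_limit {-1..1} (\<lambda>n x. \<Sum>i<n. x ^ (2*i+1) / (2 * real i + 1)\<^sup>2)
          legendre_chi sequentially"
    unfolding legendre_chi_def [abs_def]
    by (rule Weierstrass_m_test[OF _ summable_inverse_squares])
       (rule legendre_chi_term_bound, auto)
qed (intro eventuallyI continuous_intros, auto)

lemma legendre_chi_0 [simp]: "legendre_chi 0 = 0"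
  by (simp add: legendre_chi_def)

text \<open>The even-indexed terms of \<open>\<Sum> 1/(n+1)\<^sup>2 = \<pi>\<^sup>2/6\<close> sum to a quarter of it.\<close>

lemma legendre_chi_1: "legendre_chi 1 = pi\<^sup>2 / 8"
proof -
  have even: "(\<lambda>n. 1 / (2 * real n + 2)\<^sup>2) sums (pi\<^sup>2 / 24)"
    using sums_mult[OF inverse_squares_sums_real, of "1/4"]
    by (simp add: field_simps power2_eq_square)
  have odd: "(\<lambda>n. 1 / (2 * real n + 1)\<^sup>2) sums legendre_chi 1"
    using legendre_chi_sums[of 1] by simp
  have "(if even n then 1 / (2 * real (n div 2) + 1)\<^sup>2
                    else 1 / (2 * real ((n - 1) div 2) + 2)\<^sup>2)
          = 1 / (real n + 1)\<^sup>2" for n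
    by (cases "even n") (auto elim!: evenE oddE)
  with sums_if[OF even odd] have "(\<lambda>n. 1 / (real n + 1)\<^sup>2) sums (pi\<^sup>2 / 24 + legendre_chi 1)"
    by simp
  with inverse_squares_sums_real have "pi\<^sup>2 / 24 + legendre_chi 1 = pi\<^sup>2 / 6"
    using sums_unique2 by blast
  then show ?thesis
    by simp
qed

lemma artanh_sums:
  assumes "\<bar>x\<bar> < 1"
  shows "(\<lambda>n. x ^ (2*n+1) / (2 * real n + 1)) sums artanh x"
proof -
  define z where "z = (1 + x) / (1 - x)"
  have "z > 0" and z: "(z - 1) / (z + 1) = x"
    using assms by (auto simp: z_def field_simps)
  from ln_series_quadratic[OF this(1)]
  have "(\<lambda>n. 2 * x ^ (2*n+1) / (2 * real n + 1)) sums ln z"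
    unfolding z by (simp only: of_nat_add of_nat_mult of_nat_1 of_nat_numeral)
  then have "(\<lambda>n. 2 * (x ^ (2*n+1) / (2 * real n + 1))) sums (2 * artanh x)"
    by (simp add: artanh_def z_def)
  then show ?thesis
    by (subst (asm) sums_mult_iff) simp_all
qed

lemma artanh_div_sums:
  assumes "0 < x" "x < 1"
  shows "(\<lambda>n. x ^ (2*n) / (2 * real n + 1)) sums (artanh x / x)"
proof -
  have "x ^ (2*n+1) / (2 * real n + 1) / x = x ^ (2*n) / (2 * real n + 1)" for n
    using assms by simp
  with sums_divide[OF artanh_sums, of x x] assms show ?thesis
    by simp
qed

lemma legendre_chi_term_has_field_derivative:
  "((\<lambda>y. y ^ (2*n+1) / (2 * real n + 1)\<^sup>2)
      has_field_derivative (x ^ (2*n) / (2 * real n + 1))) (at x within S)"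
proof -
  have "((\<lambda>y. y ^ (2*n+1)) has_field_derivative (2 * real n + 1) * x ^ (2*n)) (at x within S)"
    using DERIV_pow[of "2*n+1" x S] by (simp add: add.commute)
  from DERIV_cdivide[OF this, of "(2 * real n + 1)\<^sup>2"] show ?thesis
    by (simp add: power2_eq_square add_pos_pos)
qed

text \<open>Term-by-term differentiation, uniformly on \<open>[-r, r]\<close> for some \<open>x < r < 1\<close>.\<close>

lemma legendre_chi_has_field_derivative:
  assumes "0 < x" "x < 1"
  shows "(legendre_chi has_field_derivative (artanh x / x)) (at x)"
proof -
  define r where "r = (1 + x) / 2"
  have r: "x < r" "r < 1" "0 < r"
    using assms by (auto simp: r_def)
  have "norm (y ^ (2*n) / (2 * real n + 1)) \<le> (r\<^sup>2) ^ n" if "y \<in> {-r..r}" for n y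
  proof -
    have "\<bar>y\<bar> ^ (2*n) \<le> r ^ (2*n)"
      using that by (intro power_mono) auto
    moreover have "\<bar>y\<bar> ^ (2*n) / (2 * real n + 1) \<le> \<bar>y\<bar> ^ (2*n)"
      using divide_left_mono[of 1 "2 * real n + 1" "\<bar>y\<bar> ^ (2*n)"] by simp
    ultimately show ?thesis
      by (simp add: power_abs power_mult abs_mult)
  qed
  moreover have "r\<^sup>2 < 1"
    using r by (simp add: abs_square_less_1)
  ultimately have uniform:
    "uniformly_convergent_on {-r..r} (\<lambda>n y. \<Sum>i<n. y ^ (2*i) / (2 * real i + 1))"
    using r by (intro Weierstrass_m_test'[where M = "\<lambda>n. (r\<^sup>2) ^ n"] summable_geometric) auto
  have summable_0: "summable (\<lambda>n. (0::real) ^ (2*n+1) / (2 * real n + 1)\<^sup>2)"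
    by simp
  have "((\<lambda>y. \<Sum>n. y ^ (2*n+1) / (2 * real n + 1)\<^sup>2)
               has_field_derivative (\<Sum>n. x ^ (2*n) / (2 * real n + 1))) (at x)"
    by (rule has_field_derivative_series'(2)
          [OF _ legendre_chi_term_has_field_derivative uniform _ summable_0])
       (use r assms in auto)
  with artanh_div_sums[OF assms] show ?thesis
    unfolding legendre_chi_def [abs_def] by (simp add: sums_iff)
qed

lemma DERIV_legendre_chi_compose [derivative_intros]:
  assumes "(f has_field_derivative f') (at x within S)" "0 < f x" "f x < 1"
  shows "((\<lambda>x. legendre_chi (f x)) has_field_derivative (artanh (f x) / f x * f')) (at x within S)"
  using DERIV_chain2[OF legendre_chi_has_field_derivative[OF assms(2,3)] assms(1)] .

lemma artanh_landen_map:
  fixes x :: real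
  assumes "0 < x" "x < 1"
  shows "artanh ((1 - x) / (1 + x)) = - ln x / 2"
proof -
  have "0 < 1 + x"
    using assms by simp
  then have "(1 + (1 - x) / (1 + x)) / (1 - (1 - x) / (1 + x)) = 1 / x"
    using assms by (simp add: divide_simps)
  then show ?thesis
    using assms by (simp add: artanh_def ln_div)
qed

lemma legendre_chi_landen_constant:
  "\<exists>c. \<forall>x\<in>{0<..<1}. legendre_chi ((1 - x) / (1 + x)) + legendre_chi x - ln x * artanh x = c"
proof (rule has_field_derivative_zero_constant)
  fix x :: real
  assume x: "x \<in> {0<..<1}"
  have "((\<lambda>x. legendre_chi ((1 - x) / (1 + x)) + legendre_chi x - ln x * artanh x)
          has_field_derivative
            (- (artanh ((1 - x) / (1 + x)) * 2 / ((1 + x) * (1 - x))) - ln x / (1 - x\<^sup>2)))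
          (at x within {0<..<1})"
    using x by (auto intro!: derivative_eq_intros)
  moreover have "- (artanh ((1 - x) / (1 + x)) * 2 / ((1 + x) * (1 - x))) - ln x / (1 - x\<^sup>2) = 0"
    using x by (simp add: artanh_landen_map field_simps power2_eq_square)
  ultimately show "((\<lambda>x. legendre_chi ((1 - x) / (1 + x)) + legendre_chi x - ln x * artanh x)
                     has_field_derivative 0) (at x within {0<..<1})"
    by simp
qed auto

text \<open>The constant is found by letting \<open>x \<rightarrow> 1\<^sup>-\<close>, where \<open>ln x artanh x \<rightarrow> 0\<close>.\<close>

theorem legendre_chi_landen:
  assumes "0 < x" "x < 1"
  shows "legendre_chi ((1 - x) / (1 + x)) + legendre_chi x - ln x * artanh x = pi\<^sup>2 / 8"
proof -
  obtain c where c: "\<And>x. x \<in> {0<..<1} \<Longrightarrow>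
      legendre_chi ((1 - x) / (1 + x)) + legendre_chi x - ln x * artanh x = c"
    using legendre_chi_landen_constant by blast
  have near_1: "eventually (\<lambda>x. x \<in> {0<..<(1::real)}) (at_left 1)"
    by (rule eventually_at_left_real) simp
  have lim_reflected: "((\<lambda>x. legendre_chi ((1 - x) / (1 + x))) \<longlongrightarrow> legendre_chi 0) (at_left 1)"
    by (rule continuous_on_tendsto_compose[OF continuous_on_legendre_chi])
       (auto intro!: tendsto_eq_intros eventually_mono[OF near_1] simp: field_simps)
  have lim_chi: "(legendre_chi \<longlongrightarrow> legendre_chi 1) (at_left 1)"
    by (rule continuous_on_tendsto_compose[OF continuous_on_legendre_chi, of "\<lambda>x. x", simplified])
       (auto intro!: eventually_mono[OF near_1] simp: at_left_eq[symmetric])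
  have lim_log: "((\<lambda>x. ln x * artanh x) \<longlongrightarrow> 0) (at_left (1::real))"
    unfolding artanh_def by real_asymp
  from tendsto_diff[OF tendsto_add[OF lim_reflected lim_chi] lim_log]
  have "((\<lambda>x. legendre_chi ((1 - x) / (1 + x)) + legendre_chi x - ln x * artanh x)
          \<longlongrightarrow> pi\<^sup>2 / 8) (at_left 1)"
    by (simp add: legendre_chi_1)
  moreover have "((\<lambda>x. legendre_chi ((1 - x) / (1 + x)) + legendre_chi x - ln x * artanh x)
                    \<longlongrightarrow> c) (at_left 1)"
    by (rule tendsto_eventually, rule eventually_mono[OF near_1]) (use c in auto)
  ultimately have "c = pi\<^sup>2 / 8"
    by (intro tendsto_unique[OF trivial_limit_at_left_real])
  with c assms show ?thesis
    by auto
qed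

corollary legendre_chi_landen_fixed_point:
  assumes "0 < x" "x < 1" "(1 - x) / (1 + x) = x"
  shows "legendre_chi x + (ln x)\<^sup>2 / 4 = pi\<^sup>2 / 16"
proof -
  have "artanh x = - ln x / 2"
    using artanh_landen_map[OF assms(1,2)] assms(3) by simp
  with legendre_chi_landen[OF assms(1,2)] assms(3) show ?thesis
    by (simp add: power2_eq_square)
qed

lemma abs_less_arsinh_cosh: "\<bar>u\<bar> < arsinh (cosh u :: real)"
proof -
  have "cosh \<bar>u\<bar> = cosh u"
    by (cases "0 \<le> u") simp_all
  with sinh_less_cosh_real[of "\<bar>u\<bar>"] have "arsinh (sinh \<bar>u\<bar>) < arsinh (cosh u)"
    by simp
  then show ?thesis
    by (simp only: arsinh_sinh_real)
qed

lemma artanh_exp_minus_add: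
  fixes u v :: real
  assumes "sinh v = cosh u"
  shows "artanh (exp (- (u + v))) = (v - u) / 2"
proof -
  define a b where "a = exp u" and "b = exp v"
  have pos: "a > 0" "b > 0"
    by (simp_all add: a_def b_def)
  have "b - 1 / b = a + 1 / a"
    using assms by (simp add: sinh_def cosh_def exp_minus a_def b_def field_simps)
  then have rel: "a + b = a * b * b - a * a * b"
    using pos by (simp add: field_simps)
  have "1 / (a * b) * (1 + a / b) = (a + b) / (a * b * b)"
    using pos by (simp add: field_simps)
  also have "\<dots> = 1 - a / b"
    unfolding rel using pos by (simp add: field_simps)
  finally have "1 / (a * b) * (1 + a / b) = 1 - a / b" .
  moreover have "1 + a / b > 0"
    using pos by (simp add: add_pos_pos)
  ultimately have "1 / (a * b) = (1 - a / b) / (1 + a / b)"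
    by (simp add: eq_divide_eq)
  also have "\<dots> = tanh ((v - u) / 2)"
  proof -
    have "- 2 * ((v - u) / 2) = u - v"
      by simp
    then show ?thesis
      by (simp only: tanh_real_altdef exp_diff a_def b_def)
  qed
  finally have "exp (- (u + v)) = tanh ((v - u) / 2)"
    unfolding a_def b_def exp_add [symmetric] exp_minus by (simp add: inverse_eq_divide)
  then show ?thesis
    by (simp only: artanh_tanh_real)
qed

definition chi_arg :: "real \<Rightarrow> real" where
  "chi_arg u = exp (- (u + arsinh (cosh u)))"

lemma arsinh_cosh_has_field_derivative [derivative_intros]:
  "((\<lambda>u. arsinh (cosh u)) has_field_derivative (sinh u / sqrt ((cosh u)\<^sup>2 + 1))) (at u within S)"
  using DERIV_chain2[OF arsinh_real_has_field_derivative has_field_derivative_cosh[OF DERIV_ident]] by simp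

lemma chi_arg_pos: "0 < chi_arg u"
  by (simp add: chi_arg_def)

lemma chi_arg_less_1: "chi_arg u < 1"
  using abs_less_arsinh_cosh[of u] by (simp add: chi_arg_def)

lemma artanh_chi_arg: "artanh (chi_arg u) = (arsinh (cosh u) - u) / 2"
  unfolding chi_arg_def by (rule artanh_exp_minus_add) simp

lemma chi_arg_0: "chi_arg 0 = sqrt 2 - 1"
proof -
  have pos: "0 < 1 + sqrt (2::real)"
    by (rule add_pos_nonneg) simp_all
  have "exp (- arsinh 1) = 1 / (1 + sqrt 2)"
    using pos by (simp add: arsinh_real_def exp_minus inverse_eq_divide add.commute)
  also have "\<dots> = sqrt 2 - 1"
    using pos by (simp add: field_simps)
  finally show ?thesis
    by (simp add: chi_arg_def)
qed

definition arsinh_cosh_antideriv :: "real \<Rightarrow> real" where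
  "arsinh_cosh_antideriv u = - (legendre_chi (chi_arg u) + (arsinh (cosh u) - u)\<^sup>2 / 4)"

lemma arsinh_cosh_antideriv_has_field_derivative:
  "(arsinh_cosh_antideriv has_field_derivative (arsinh (cosh u) - u)) (at u within S)"
proof -
  define v' where "v' = sinh u / sqrt ((cosh u)\<^sup>2 + 1)"
  have "(arsinh_cosh_antideriv has_field_derivative
          - (artanh (chi_arg u) * (- 1 - v')) - (arsinh (cosh u) - u) * (v' - 1) / 2)
          (at u within S)"
    unfolding arsinh_cosh_antideriv_def chi_arg_def v'_def
    using chi_arg_pos[of u] chi_arg_less_1[of u]
    by (auto intro!: derivative_eq_intros simp: chi_arg_def)
  moreover have "- (artanh (chi_arg u) * (- 1 - v')) - (arsinh (cosh u) - u) * (v' - 1) / 2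
                   = arsinh (cosh u) - u"
    by (simp add: artanh_chi_arg field_simps)
  ultimately show ?thesis
    by simp
qed

lemma chi_arg_tendsto_0: "(chi_arg \<longlongrightarrow> 0) at_top"
proof (rule tendsto_sandwich)
  show "\<forall>\<^sub>F u in at_top. 0 \<le> chi_arg u"
    by (simp add: chi_arg_def)
  have "chi_arg u \<le> exp (- u)" for u
    using abs_less_arsinh_cosh[of u] by (simp add: chi_arg_def)
  then show "\<forall>\<^sub>F u in at_top. chi_arg u \<le> exp (- u)"
    by simp
  show "((\<lambda>u::real. exp (- u)) \<longlongrightarrow> 0) at_top"
    by real_asymp
qed simp

lemma arsinh_cosh_antideriv_tendsto_0: "(arsinh_cosh_antideriv \<longlongrightarrow> 0) at_top"
proof -
  have "chi_arg u \<in> {-1..1}" for u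
    using chi_arg_pos[of u] chi_arg_less_1[of u] by auto
  then have lim_chi: "((\<lambda>u. legendre_chi (chi_arg u)) \<longlongrightarrow> legendre_chi 0) at_top"
    by (intro continuous_on_tendsto_compose[OF continuous_on_legendre_chi chi_arg_tendsto_0]) auto
  have lim_artanh: "((\<lambda>u. artanh (chi_arg u)) \<longlongrightarrow> artanh 0) at_top"
    by (intro tendsto_artanh chi_arg_tendsto_0) auto
  have "arsinh_cosh_antideriv = (\<lambda>u. - (legendre_chi (chi_arg u) + (artanh (chi_arg u))\<^sup>2))"
    by (simp add: fun_eq_iff arsinh_cosh_antideriv_def artanh_chi_arg power_divide)
  with tendsto_minus[OF tendsto_add[OF lim_chi tendsto_power[OF lim_artanh, of 2]]] show ?thesis
    by simp
qed

lemma arsinh_cosh_antideriv_0: "arsinh_cosh_antideriv 0 = - (pi\<^sup>2 / 16)"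
proof -
  have x0: "0 < sqrt 2 - 1" "sqrt 2 - 1 < (1::real)"
    by (simp_all add: real_less_rsqrt real_less_lsqrt)
  have "(1 - (sqrt 2 - 1)) / (1 + (sqrt 2 - 1)) = sqrt 2 - 1"
    by (simp add: field_simps)
  from legendre_chi_landen_fixed_point[OF x0 this]
  have "legendre_chi (chi_arg 0) + (ln (chi_arg 0))\<^sup>2 / 4 = pi\<^sup>2 / 16"
    by (simp add: chi_arg_0)
  then show ?thesis
    by (simp add: arsinh_cosh_antideriv_def chi_arg_def)
qed

theorem theorem1:
  shows "((\<lambda>u::real. arsinh (cosh u) - u) has_integral (pi\<^sup>2 / 16)) {0..}"
proof (rule has_integral_to_inf)
  show "(\<lambda>u::real. arsinh (cosh u) - u) integrable_on {0..y}" for y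
    by (intro integrable_continuous_interval continuous_intros)
  show "0 \<le> arsinh (cosh u) - u" for u :: real
    using abs_less_arsinh_cosh[of u] by simp
  have "((\<lambda>u. arsinh (cosh u) - u) has_integral
          (arsinh_cosh_antideriv y - arsinh_cosh_antideriv 0)) {0..y}" if "0 \<le> y" for y
    using that arsinh_cosh_antideriv_has_field_derivative
    by (intro fundamental_theorem_of_calculus)
       (auto simp: has_real_derivative_iff_has_vector_derivative [symmetric])
  then have "\<forall>\<^sub>F y in at_top. arsinh_cosh_antideriv y + pi\<^sup>2 / 16
               = integral {0..y} (\<lambda>u. arsinh (cosh u) - u)"
    by (intro eventually_mono[OF eventually_ge_at_top[of 0]] integral_unique[symmetric])
       (simp add: arsinh_cosh_antideriv_0)
  moreover have "((\<lambda>y. arsinh_cosh_antideriv y + pi\<^sup>2 / 16) \<longlongrightarrow> pi\<^sup>2 / 16) at_top"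
    using tendsto_add[OF arsinh_cosh_antideriv_tendsto_0 tendsto_const] by simp
  ultimately show "((\<lambda>y. integral {0..y} (\<lambda>u. arsinh (cosh u) - u)) \<longlongrightarrow> pi\<^sup>2 / 16) at_top"
    by (simp add: Lim_transform_eventually)
qed

end
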